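(* In any generalized-noncontextual ontological model of quantum theory, for each unit vector $\hat n_k\in\mathbb{R}^3$ and $\eta\in[0,1]$, the response function of the $\eta$-sharp spin measurement $\mathcal{M}_k$ given by the qubit POVM $\{E^k_{X_k}=\tfrac12\mathbf{1}+\tfrac{\eta}{2}X_k\vec\sigma\cdot\hat n_k\}_{X_k\in\{+1,-1\}}$ has the form $$p(X_k|\mathcal{M}_k;\lambda)=\eta\,[X_k(\lambda)]+(1-\eta)\big(\tfrac12[+1]+\tfrac12[-1]\big),$$ where $X_k(\lambda)\in\{+1,-1\}$ is the outcome assigned at $\lambda$ to the projective spin measurement along $\hat n_k$, and $[x]$ denotes the deterministic response function assigning probability 1 to outcome $x$.
   Context: An ontological model of quantum theory specifies ontic states $\lambda$, distributions $p(\lambda|P)$ for preparation procedures and response functions $p(X|M;\lambda)$ for measurement procedures reproducing the quantum statistics. It is measurement-noncontextual if operationally equivalent measurement procedures (same POVM) have identical response functions, preparation-noncontextual if operationally equivalent preparation procedures (same density operator) have identical distributions, and generalized-noncontextual if it is both. $\vec\sigma$ denotes the vector of Pauli matrices. *)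

theory Defs
  imports "HOL-Analysis.Analysis" "HOL-Probability.Probability"
begin

type_synonym qop = "complex^2^2"

definition pauli_x :: qop where
  "pauli_x = (\<chi> i j. if i \<noteq> j then 1 else 0)"

definition pauli_y :: qop where
  "pauli_y = (\<chi> i j. if i = 0 \<and> j = 1 then - \<i> else if i = 1 \<and> j = 0 then \<i> else 0)"

definition pauli_z :: qop where
  "pauli_z = (\<chi> i j. if i = j then (if i = 0 then 1 else -1) else 0)"

definition sigma_dot :: "real^3 \<Rightarrow> qop" where
  "sigma_dot n = (n$1) *\<^sub>R pauli_x + (n$2) *\<^sub>R pauli_y + (n$3) *\<^sub>R pauli_z"

definition hermitian_op :: "qop \<Rightarrow> bool" where
  "hermitian_op A \<longleftrightarrow> (\<forall>i j. A$i$j = cnj (A$j$i))"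

definition psd_op :: "qop \<Rightarrow> bool" where
  "psd_op A \<longleftrightarrow> hermitian_op A \<and>
     (\<forall>v::complex^2. 0 \<le> Re (\<Sum>i\<in>UNIV. cnj (v$i) * (A *v v)$i))"

definition density_op :: "qop \<Rightarrow> bool" where
  "density_op \<rho> \<longleftrightarrow> psd_op \<rho> \<and> trace \<rho> = 1"

definition is_povm :: "int set \<Rightarrow> (int \<Rightarrow> qop) \<Rightarrow> bool" where
  "is_povm T E \<longleftrightarrow> (\<forall>X\<in>T. psd_op (E X)) \<and> (\<forall>X. X \<notin> T \<longrightarrow> E X = 0)
      \<and> (\<Sum>X\<in>T. E X) = mat 1"

definition sharp_effect :: "real \<Rightarrow> real^3 \<Rightarrow> int \<Rightarrow> qop" where
  "sharp_effect \<eta> n X = (1/2) *\<^sub>R mat 1 + (\<eta> / 2 * real_of_int X) *\<^sub>R sigma_dot n"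

definition det_resp :: "int \<Rightarrow> int \<Rightarrow> real" where
  "det_resp x X = (if X = x then 1 else 0)"

text \<open>
  Preparation procedures (type 'p): density operator rho P, distribution mu P.
  Measurement procedures (type 'm): finite outcome set outs M (integer labels),
  POVM povm M, response functions xi M X lambda = p(X|M;lambda).\<close>
definition ontological_model ::
  "'l measure \<Rightarrow> ('p \<Rightarrow> qop) \<Rightarrow> ('p \<Rightarrow> 'l measure) \<Rightarrow> ('m \<Rightarrow> int set)
    \<Rightarrow> ('m \<Rightarrow> int \<Rightarrow> qop) \<Rightarrow> ('m \<Rightarrow> int \<Rightarrow> 'l \<Rightarrow> real) \<Rightarrow> bool" where
  "ontological_model L rho mu outs povm xi \<longleftrightarrow>
     (\<forall>P. density_op (rho P) \<and> prob_space (mu P) \<and> sets (mu P) = sets L) \<and>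
     (\<forall>M. finite (outs M) \<and> outs M \<noteq> {} \<and> is_povm (outs M) (povm M) \<and>
          (\<forall>X. xi M X \<in> borel_measurable L) \<and>
          (\<forall>X lam. 0 \<le> xi M X lam) \<and>
          (\<forall>X lam. X \<notin> outs M \<longrightarrow> xi M X lam = 0) \<and>
          (\<forall>lam. (\<Sum>X\<in>outs M. xi M X lam) = 1)) \<and>
     (\<forall>P M X. (\<integral>lam. xi M X lam \<partial>(mu P)) = Re (trace (rho P ** povm M X))) \<and>
     (\<forall>\<rho>. density_op \<rho> \<longrightarrow> (\<exists>P. rho P = \<rho>)) \<and>
     (\<forall>T E. finite T \<and> T \<noteq> {} \<and> is_povm T E \<longrightarrow> (\<exists>M. outs M = T \<and> povm M = E)) \<and>
     (\<forall>P1 P2 p. 0 \<le> p \<and> p \<le> 1 \<longrightarrow>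
        (\<exists>P. rho P = p *\<^sub>R rho P1 + (1 - p) *\<^sub>R rho P2 \<and>
             (\<forall>A\<in>sets L. measure (mu P) A = p * measure (mu P1) A + (1 - p) * measure (mu P2) A))) \<and>
     (\<forall>M1 M2 p. 0 \<le> p \<and> p \<le> 1 \<longrightarrow>
        (\<exists>M. outs M = outs M1 \<union> outs M2 \<and>
             (\<forall>X. povm M X = p *\<^sub>R povm M1 X + (1 - p) *\<^sub>R povm M2 X) \<and>
             (\<forall>X lam. xi M X lam = p * xi M1 X lam + (1 - p) * xi M2 X lam))) \<and>
     (\<forall>M T (q :: int \<Rightarrow> int \<Rightarrow> real). finite T \<and> T \<noteq> {} \<and> (\<forall>Y X. 0 \<le> q Y X) \<and>
          (\<forall>X\<in>outs M. (\<Sum>Y\<in>T. q Y X) = 1) \<longrightarrow>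
        (\<exists>M'. outs M' = T \<and>
             (\<forall>Y\<in>T. povm M' Y = (\<Sum>X\<in>outs M. q Y X *\<^sub>R povm M X) \<and>
                     (\<forall>lam. xi M' Y lam = (\<Sum>X\<in>outs M. q Y X * xi M X lam)))))"

text \<open>Operational equivalence: same density operator / same POVM.\<close>
definition preparation_noncontextual :: "('p \<Rightarrow> qop) \<Rightarrow> ('p \<Rightarrow> 'l measure) \<Rightarrow> bool" where
  "preparation_noncontextual rho mu \<longleftrightarrow> (\<forall>P1 P2. rho P1 = rho P2 \<longrightarrow> mu P1 = mu P2)"

definition measurement_noncontextual ::
  "('m \<Rightarrow> int set) \<Rightarrow> ('m \<Rightarrow> int \<Rightarrow> qop) \<Rightarrow> ('m \<Rightarrow> int \<Rightarrow> 'l \<Rightarrow> real) \<Rightarrow> bool" where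
  "measurement_noncontextual outs povm xi \<longleftrightarrow>
     (\<forall>M1 M2. outs M1 = outs M2 \<and> povm M1 = povm M2 \<longrightarrow> xi M1 = xi M2)"

definition generalized_noncontextual ::
  "('p \<Rightarrow> qop) \<Rightarrow> ('p \<Rightarrow> 'l measure) \<Rightarrow> ('m \<Rightarrow> int set) \<Rightarrow> ('m \<Rightarrow> int \<Rightarrow> qop)
    \<Rightarrow> ('m \<Rightarrow> int \<Rightarrow> 'l \<Rightarrow> real) \<Rightarrow> bool" where
  "generalized_noncontextual rho mu outs povm xi \<longleftrightarrow>
     preparation_noncontextual rho mu \<and> measurement_noncontextual outs povm xi"

end

theory Submission
  imports Defs
begin

(* The projective spin measurement along n has a response function xi0 = p(+1|M;lambda) with
   integral 1 in the +1 eigenstate and 0 in the -1 eigenstate, so xi0 is {0,1}-valued almost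
   everywhere in both.  The two eigenstates average to the maximally mixed state 1/2, and so does
   every state rho together with its complement 1 - rho; preparation noncontextuality makes all
   these averages the same distribution, so a null set for the two eigenstates is null for every
   preparation.  Hence xi0 defines an outcome assignment X(lambda) almost surely.  The eta-sharp
   measurement has the same POVM as the eta-mixture of the projective measurement with a fair coin
   flip, and measurement noncontextuality transfers the mixture's response function to it. *)

lemma psd_op_if_hermitian_idempotent:
  assumes "hermitian_op E" "E ** E = E"
  shows "psd_op E"
  unfolding psd_op_def
proof (intro conjI allI)
  show "hermitian_op E" by fact
  fix v :: "complex^2"
  define w where "w = E *v v"
  have herm: "\<And>i j. E$i$j = cnj (E$j$i)" using assms(1) unfolding hermitian_op_def by blast
  have cnj_w: "cnj (w$j) = (\<Sum>i\<in>UNIV. cnj (v$i) * E$i$j)" for j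
  proof -
    have "cnj (w$j) = (\<Sum>i\<in>UNIV. cnj (E$j$i) * cnj (v$i))"
      by (simp add: w_def matrix_vector_mult_def)
    also have "\<dots> = (\<Sum>i\<in>UNIV. cnj (v$i) * E$i$j)"
      by (rule sum.cong) (simp_all add: herm[of _ j])
    finally show ?thesis .
  qed
  have "(\<Sum>i\<in>UNIV. cnj (v$i) * (E *v v)$i) = (\<Sum>i\<in>UNIV. cnj (v$i) * (E *v w)$i)"
    using assms(2) unfolding w_def by (simp add: matrix_vector_mul_assoc)
  also have "\<dots> = (\<Sum>j\<in>UNIV. \<Sum>i\<in>UNIV. cnj (v$i) * E$i$j * w$j)"
    by (subst sum.swap) (simp add: matrix_vector_mult_def sum_distrib_left mult.assoc)
  also have "\<dots> = (\<Sum>j\<in>UNIV. cnj (w$j) * w$j)"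
    by (simp add: cnj_w sum_distrib_right)
  finally show "0 \<le> Re (\<Sum>i\<in>UNIV. cnj (v$i) * (E *v v)$i)"
    by (simp add: Re_sum sum_nonneg)
qed

lemma density_op_complement:
  assumes "density_op \<rho>"
  shows "density_op (mat 1 - \<rho>)"
proof -
  have psd: "psd_op \<rho>" and tr: "trace \<rho> = 1" using assms unfolding density_op_def by auto
  have herm: "\<And>i j. \<rho>$i$j = cnj (\<rho>$j$i)" using psd unfolding psd_op_def hermitian_op_def by blast
  have "(mat 1 - \<rho>)$i$j = cnj ((mat 1 - \<rho>)$j$i)" for i j
    using herm[of i j] by (simp add: mat_def)
  then have "hermitian_op (mat 1 - \<rho>)" unfolding hermitian_op_def by blast
  moreover have "0 \<le> Re (\<Sum>i\<in>UNIV. cnj (v$i) * ((mat 1 - \<rho>) *v v)$i)" for v :: "complex^2"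
  proof -
    \<comment> \<open>For a 2x2 matrix of trace 1, the quadratic form of 1 - rho at v is that of rho at the
      vector obtained from v by swapping the conjugated entries and negating one of them.\<close>
    define w :: "complex^2" where "w = (\<chi> i. if i = 1 then cnj (v$2) else - cnj (v$1))"
    have diag: "\<rho>$1$1 = 1 - \<rho>$2$2" using tr by (simp add: trace_def sum_2 algebra_simps)
    have "(\<Sum>i\<in>UNIV. cnj (v$i) * ((mat 1 - \<rho>) *v v)$i) = (\<Sum>i\<in>UNIV. cnj (w$i) * (\<rho> *v w)$i)"
      unfolding w_def by (simp add: sum_2 matrix_vector_mult_def mat_def diag algebra_simps)
    then show ?thesis using psd unfolding psd_op_def by simp
  qed
  moreover have "trace (mat 1 - \<rho>) = 1" using tr by (simp add: trace_sub trace_I)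
  ultimately show ?thesis unfolding density_op_def psd_op_def by blast
qed

lemma norm_vec3_squared: "norm (n::real^3) ^ 2 = (n$1)^2 + (n$2)^2 + (n$3)^2"
  unfolding power2_norm_eq_inner by (simp add: inner_vec_def sum_3 power2_eq_square)

lemmas sigma_dot_defs = sigma_dot_def pauli_x_def pauli_y_def pauli_z_def

lemma bloch_form_mult:
  "((a::real) *\<^sub>R mat 1 + b *\<^sub>R sigma_dot n) ** (c *\<^sub>R mat 1 + d *\<^sub>R sigma_dot n)
     = (a * c + b * d * norm n ^ 2) *\<^sub>R mat 1 + (a * d + b * c) *\<^sub>R (sigma_dot n :: qop)"
  unfolding sigma_dot_defs norm_vec3_squared
  by (simp add: vec_eq_iff matrix_matrix_mult_def sum_2 forall_2 mat_def)
     (simp add: complex_eq_iff power2_eq_square algebra_simps)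

lemma trace_bloch_form: "trace ((a::real) *\<^sub>R mat 1 + b *\<^sub>R (sigma_dot n :: qop)) = 2 * a"
  unfolding sigma_dot_defs trace_def by (simp add: sum_2 mat_def complex_eq_iff)

lemma hermitian_bloch_form: "hermitian_op ((a::real) *\<^sub>R mat 1 + b *\<^sub>R (sigma_dot n :: qop))"
  unfolding sigma_dot_defs hermitian_op_def by (simp add: forall_2 complex_eq_iff mat_def)

lemma sharp_effect_idempotent:
  assumes "norm n = 1" "X \<in> {1, -1}"
  shows "sharp_effect 1 n X ** sharp_effect 1 n X = sharp_effect 1 n X"
  using assms unfolding sharp_effect_def bloch_form_mult by auto

lemma sharp_effect_orthogonal:
  assumes "norm n = 1"
  shows "sharp_effect 1 n (-1) ** sharp_effect 1 n 1 = 0"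
  using assms unfolding sharp_effect_def bloch_form_mult by simp

lemma trace_sharp_effect: "trace (sharp_effect \<eta> n X) = 1"
  unfolding sharp_effect_def trace_bloch_form by simp

lemma density_op_sharp_effect:
  assumes "norm n = 1" "X \<in> {1, -1}"
  shows "density_op (sharp_effect 1 n X)"
  unfolding density_op_def
  using psd_op_if_hermitian_idempotent[OF _ sharp_effect_idempotent[OF assms]]
  by (simp add: sharp_effect_def hermitian_bloch_form trace_bloch_form)

lemma sharp_effect_sum: "sharp_effect \<eta> n 1 + sharp_effect \<eta> n (-1) = mat 1"
  unfolding sharp_effect_def by (simp add: algebra_simps flip: scaleR_add_left)

lemma sharp_effect_noisy:
  "\<eta> *\<^sub>R sharp_effect 1 n X + ((1 - \<eta>) / 2) *\<^sub>R mat 1 = sharp_effect \<eta> n X"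
  unfolding sharp_effect_def by (simp add: algebra_simps flip: scaleR_add_left) (simp add: field_simps)

lemma is_povm_sharp_effect:
  assumes "norm n = 1"
  shows "is_povm {1, -1} (\<lambda>X. if X \<in> {1, -1} then sharp_effect 1 n X else 0)"
  unfolding is_povm_def using density_op_sharp_effect[OF assms] sharp_effect_sum[of 1 n]
  by (auto simp: density_op_def)

context prob_space
begin

lemma AE_eq_0_if_integral_eq_0:
  fixes f :: "'a \<Rightarrow> real"
  assumes "f \<in> borel_measurable M" "\<And>x. 0 \<le> f x" "\<And>x. f x \<le> 1" "integral\<^sup>L M f = 0"
  shows "AE x in M. f x = 0"
proof -
  have "integrable M f"
    by (rule integrable_const_bound[where B=1]) (use assms in auto)
  then show ?thesis using integral_nonneg_eq_0_iff_AE[of M f] assms by auto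
qed

lemma AE_eq_1_if_integral_eq_1:
  fixes f :: "'a \<Rightarrow> real"
  assumes "f \<in> borel_measurable M" "\<And>x. 0 \<le> f x" "\<And>x. f x \<le> 1" "integral\<^sup>L M f = 1"
  shows "AE x in M. f x = 1"
proof -
  have "integrable M f"
    by (rule integrable_const_bound[where B=1]) (use assms in auto)
  then have "integral\<^sup>L M (\<lambda>x. 1 - f x) = 0"
    using assms(4) by (simp add: prob_space)
  then have "AE x in M. 1 - f x = 0"
    by (intro AE_eq_0_if_integral_eq_0) (use assms in auto)
  then show ?thesis by auto
qed

end

locale noncontextual_model =
  fixes L :: "'l measure" and rho :: "'p \<Rightarrow> qop" and mu :: "'p \<Rightarrow> 'l measure"
    and outs :: "'m \<Rightarrow> int set" and povm :: "'m \<Rightarrow> int \<Rightarrow> qop"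
    and xi :: "'m \<Rightarrow> int \<Rightarrow> 'l \<Rightarrow> real"
  assumes preparations: "\<forall>P. density_op (rho P) \<and> prob_space (mu P) \<and> sets (mu P) = sets L"
    and measurements: "\<forall>M. finite (outs M) \<and> outs M \<noteq> {} \<and> is_povm (outs M) (povm M) \<and>
          (\<forall>X. xi M X \<in> borel_measurable L) \<and>
          (\<forall>X lam. 0 \<le> xi M X lam) \<and>
          (\<forall>X lam. X \<notin> outs M \<longrightarrow> xi M X lam = 0) \<and>
          (\<forall>lam. (\<Sum>X\<in>outs M. xi M X lam) = 1)"
    and born: "\<forall>P M X. (\<integral>lam. xi M X lam \<partial>(mu P)) = Re (trace (rho P ** povm M X))"
    and all_states: "\<forall>\<rho>. density_op \<rho> \<longrightarrow> (\<exists>P. rho P = \<rho>)"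
    and all_povms: "\<forall>T E. finite T \<and> T \<noteq> {} \<and> is_povm T E \<longrightarrow> (\<exists>M. outs M = T \<and> povm M = E)"
    and preparation_mixing: "\<forall>P1 P2 p. 0 \<le> p \<and> p \<le> 1 \<longrightarrow>
        (\<exists>P. rho P = p *\<^sub>R rho P1 + (1 - p) *\<^sub>R rho P2 \<and>
             (\<forall>A\<in>sets L. measure (mu P) A = p * measure (mu P1) A + (1 - p) * measure (mu P2) A))"
    and measurement_mixing: "\<forall>M1 M2 p. 0 \<le> p \<and> p \<le> 1 \<longrightarrow>
        (\<exists>M. outs M = outs M1 \<union> outs M2 \<and>
             (\<forall>X. povm M X = p *\<^sub>R povm M1 X + (1 - p) *\<^sub>R povm M2 X) \<and>
             (\<forall>X lam. xi M X lam = p * xi M1 X lam + (1 - p) * xi M2 X lam))"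
    and post_processing: "\<forall>M T (q :: int \<Rightarrow> int \<Rightarrow> real). finite T \<and> T \<noteq> {} \<and> (\<forall>Y X. 0 \<le> q Y X) \<and>
          (\<forall>X\<in>outs M. (\<Sum>Y\<in>T. q Y X) = 1) \<longrightarrow>
        (\<exists>M'. outs M' = T \<and>
             (\<forall>Y\<in>T. povm M' Y = (\<Sum>X\<in>outs M. q Y X *\<^sub>R povm M X) \<and>
                     (\<forall>lam. xi M' Y lam = (\<Sum>X\<in>outs M. q Y X * xi M X lam))))"
    and preparation_nc: "preparation_noncontextual rho mu"
    and measurement_nc: "measurement_noncontextual outs povm xi"

lemma noncontextual_modelI:
  assumes "ontological_model L rho mu outs povm xi"
    and "generalized_noncontextual rho mu outs povm xi"
  shows "noncontextual_model L rho mu outs povm xi"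
  using assms unfolding ontological_model_def generalized_noncontextual_def
  by (elim conjE) (unfold_locales; assumption)

context noncontextual_model
begin

lemma prob_space_mu: "prob_space (mu P)"
  using preparations by blast

lemma sets_mu: "sets (mu P) = sets L"
  using preparations by blast

lemma density_op_rho: "density_op (rho P)"
  using preparations by blast

lemma povm_outside_outs: "X \<notin> outs M \<Longrightarrow> povm M X = 0"
  using measurements unfolding is_povm_def by blast

lemma response_measurable: "xi M X \<in> borel_measurable L"
  using measurements by blast

lemma response_nonneg: "0 \<le> xi M X l"
  using measurements by blast

lemma response_sum: "(\<Sum>X\<in>outs M. xi M X l) = 1"
  using measurements by blast

lemma response_le_1: "xi M X l \<le> 1"
proof (cases "X \<in> outs M")
  case True
  have "finite (outs M)" using measurements by blast
  then have "xi M X l \<le> (\<Sum>Y\<in>outs M. xi M Y l)"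
    using True by (intro member_le_sum) (auto intro: response_nonneg)
  then show ?thesis by (simp add: response_sum)
next
  case False
  then show ?thesis using measurements by simp
qed

lemma born_rule: "(\<integral>l. xi M X l \<partial>mu P) = Re (trace (rho P ** povm M X))"
  using born by blast

lemma exists_preparation: "density_op \<rho> \<Longrightarrow> \<exists>P. rho P = \<rho>"
  using all_states by blast

lemma exists_measurement:
  "finite T \<Longrightarrow> T \<noteq> {} \<Longrightarrow> is_povm T E \<Longrightarrow> \<exists>M. outs M = T \<and> povm M = E"
  using all_povms by blast

lemma exists_mixed_preparation:
  assumes "0 \<le> p" "p \<le> 1"
  obtains P where "rho P = p *\<^sub>R rho P1 + (1 - p) *\<^sub>R rho P2"
    "\<And>A. A \<in> sets L \<Longrightarrow> measure (mu P) A = p * measure (mu P1) A + (1 - p) * measure (mu P2) A"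
  using preparation_mixing assms by blast

lemma exists_mixed_measurement:
  assumes "0 \<le> p" "p \<le> 1"
  obtains M where "outs M = outs M1 \<union> outs M2"
    "\<And>X. povm M X = p *\<^sub>R povm M1 X + (1 - p) *\<^sub>R povm M2 X"
    "\<And>X l. xi M X l = p * xi M1 X l + (1 - p) * xi M2 X l"
  using measurement_mixing assms by blast

lemma exists_post_processing:
  assumes "finite T" "T \<noteq> {}" "\<And>Y X. 0 \<le> q Y X" "\<And>X. X \<in> outs M \<Longrightarrow> (\<Sum>Y\<in>T. q Y X) = 1"
  obtains M' where "outs M' = T"
    "\<And>Y. Y \<in> T \<Longrightarrow> povm M' Y = (\<Sum>X\<in>outs M. q Y X *\<^sub>R povm M X)"
    "\<And>Y l. Y \<in> T \<Longrightarrow> xi M' Y l = (\<Sum>X\<in>outs M. q Y X * xi M X l)"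
proof -
  have "\<exists>M'. outs M' = T \<and> (\<forall>Y\<in>T. povm M' Y = (\<Sum>X\<in>outs M. q Y X *\<^sub>R povm M X) \<and>
                 (\<forall>l. xi M' Y l = (\<Sum>X\<in>outs M. q Y X * xi M X l)))"
    using post_processing assms by blast
  then show ?thesis using that by blast
qed

lemma mu_eq_if_rho_eq: "rho P1 = rho P2 \<Longrightarrow> mu P1 = mu P2"
  using preparation_nc unfolding preparation_noncontextual_def by blast

lemma response_eq_if_povm_eq:
  assumes "outs M1 = outs M2" "\<And>X. X \<in> outs M1 \<Longrightarrow> povm M1 X = povm M2 X"
  shows "xi M1 = xi M2"
proof -
  have "povm M1 = povm M2"
    using assms povm_outside_outs by (metis ext)
  then show ?thesis
    using assms(1) measurement_nc unfolding measurement_noncontextual_def by blast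
qed

lemma AE_response_eq_1:
  assumes "Re (trace (rho P ** povm M X)) = 1"
  shows "AE l in mu P. xi M X l = 1"
  using prob_space.AE_eq_1_if_integral_eq_1[OF prob_space_mu] response_measurable
    response_nonneg response_le_1 born_rule assms measurable_cong_sets[OF sets_mu refl]
  by metis

lemma AE_response_eq_0:
  assumes "Re (trace (rho P ** povm M X)) = 0"
  shows "AE l in mu P. xi M X l = 0"
  using prob_space.AE_eq_0_if_integral_eq_0[OF prob_space_mu] response_measurable
    response_nonneg response_le_1 born_rule assms measurable_cong_sets[OF sets_mu refl]
  by metis

lemma measure_complementary_preparations:
  assumes "rho P1 + rho P2 = mat 1" "rho Q = (1/2) *\<^sub>R mat 1" "A \<in> sets L"
  shows "measure (mu P1) A + measure (mu P2) A = 2 * measure (mu Q) A"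
proof -
  obtain Q' where Q': "rho Q' = (1/2) *\<^sub>R rho P1 + (1 - 1/2) *\<^sub>R rho P2"
    "measure (mu Q') A = 1/2 * measure (mu P1) A + (1 - 1/2) * measure (mu P2) A"
    using exists_mixed_preparation[of "1/2" P1 P2] assms(3) by auto
  have "rho Q' = rho Q" using Q'(1) assms(1,2) by (simp flip: scaleR_add_right)
  then have "mu Q' = mu Q" by (rule mu_eq_if_rho_eq)
  then show ?thesis using Q'(2) by simp
qed

lemma AE_all_preparations_if_AE_complementary:
  assumes "B \<in> sets L" "rho P1 + rho P2 = mat 1"
    "AE l in mu P1. l \<notin> B" "AE l in mu P2. l \<notin> B"
  shows "AE l in mu P. l \<notin> B"
proof -
  have null: "measure (mu P) B = 0 \<longleftrightarrow> (AE l in mu P. l \<notin> B)" for P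
    using prob_space.prob_eq_0[OF prob_space_mu] assms(1) sets_mu by blast
  obtain Q where "rho Q = (1/2) *\<^sub>R rho P1 + (1 - 1/2) *\<^sub>R rho P2"
    using exists_mixed_preparation[of "1/2" P1 P2] by auto
  then have Q: "rho Q = (1/2) *\<^sub>R mat 1"
    using assms(2) by (simp flip: scaleR_add_right)
  have "measure (mu P1) B = 0" "measure (mu P2) B = 0" using assms(3,4) null by blast+
  then have "measure (mu Q) B = 0"
    using measure_complementary_preparations[OF assms(2) Q assms(1)] by simp
  obtain P' where P': "rho P' = mat 1 - rho P"
    using exists_preparation density_op_complement density_op_rho by blast
  have "measure (mu P) B + measure (mu P') B = 0"
    using measure_complementary_preparations[of P P' Q B] P' Q assms(1) \<open>measure (mu Q) B = 0\<close>
    by simp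
  then have "measure (mu P) B = 0"
    using measure_nonneg[of "mu P" B] measure_nonneg[of "mu P'" B] by linarith
  then show ?thesis using null by blast
qed

definition spin_measurement :: "real \<Rightarrow> real^3 \<Rightarrow> 'm \<Rightarrow> bool" where
  "spin_measurement \<eta> n M \<longleftrightarrow> outs M = {1, -1} \<and> (\<forall>X\<in>{1, -1}. povm M X = sharp_effect \<eta> n X)"

lemma exists_spin_measurement: "norm n = 1 \<Longrightarrow> \<exists>M. spin_measurement 1 n M"
  using exists_measurement[OF _ _ is_povm_sharp_effect] unfolding spin_measurement_def by force

lemma response_spin_measurement_unique:
  "spin_measurement \<eta> n M1 \<Longrightarrow> spin_measurement \<eta> n M2 \<Longrightarrow> xi M1 = xi M2"
  unfolding spin_measurement_def by (intro response_eq_if_povm_eq) auto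

lemma exists_coin_flip_measurement:
  obtains M where "outs M = {1, -1}"
    "\<And>Y. Y \<in> {1, -1} \<Longrightarrow> povm M Y = (1/2) *\<^sub>R mat 1"
    "\<And>Y l. Y \<in> {1, -1} \<Longrightarrow> xi M Y l = 1/2"
proof -
  fix M0
  have povm_sum: "(\<Sum>X\<in>outs M0. povm M0 X) = mat 1"
    using measurements unfolding is_povm_def by blast
  obtain M where M: "outs M = {1, -1}"
    "\<And>Y. Y \<in> {1, -1} \<Longrightarrow> povm M Y = (\<Sum>X\<in>outs M0. (1/2::real) *\<^sub>R povm M0 X)"
    "\<And>Y l. Y \<in> {1, -1} \<Longrightarrow> xi M Y l = (\<Sum>X\<in>outs M0. 1/2 * xi M0 X l)"
    by (rule exists_post_processing[of "{1, -1}" "\<lambda>Y X. 1/2" M0]) auto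
  have "(\<Sum>X\<in>outs M0. (1/2::real) *\<^sub>R povm M0 X) = (1/2) *\<^sub>R mat 1"
    by (simp add: povm_sum flip: scaleR_sum_right)
  moreover have "(\<Sum>X\<in>outs M0. 1/2 * xi M0 X l) = 1/2" for l
    unfolding sum_distrib_left[symmetric] response_sum by simp
  ultimately show ?thesis
    using M by (intro that) auto
qed

lemma response_noisy_spin_measurement:
  assumes "spin_measurement 1 n M0" "spin_measurement \<eta> n M" "\<eta> \<in> {0..1}" "X \<in> {1, -1}"
  shows "xi M X l = \<eta> * xi M0 X l + (1 - \<eta>) / 2"
proof -
  obtain Mc where Mc: "outs Mc = {1, -1}"
    "\<And>Y. Y \<in> {1, -1} \<Longrightarrow> povm Mc Y = (1/2) *\<^sub>R mat 1"
    "\<And>Y l. Y \<in> {1, -1} \<Longrightarrow> xi Mc Y l = 1/2"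
    using exists_coin_flip_measurement by blast
  obtain Me where Me: "outs Me = outs M0 \<union> outs Mc"
    "\<And>X. povm Me X = \<eta> *\<^sub>R povm M0 X + (1 - \<eta>) *\<^sub>R povm Mc X"
    "\<And>X l. xi Me X l = \<eta> * xi M0 X l + (1 - \<eta>) * xi Mc X l"
    using exists_mixed_measurement[of \<eta> M0 Mc] assms(3) by auto
  have "spin_measurement \<eta> n Me"
    using assms(1) Me(1,2) Mc(1,2) unfolding spin_measurement_def
    by (simp add: sharp_effect_noisy)
  with assms(2) have "xi M = xi Me"
    by (rule response_spin_measurement_unique)
  then show ?thesis using Me(3) Mc(3)[OF assms(4)] by simp
qed

lemma AE_response_spin_measurement_binary:
  assumes "norm n = 1" "spin_measurement 1 n M0"
  shows "AE l in mu P. xi M0 1 l \<in> {0, 1}"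
proof -
  define B where "B = {l \<in> space L. xi M0 1 l \<notin> {0, 1}}"
  have B: "B \<in> sets L" unfolding B_def using response_measurable by measurable
  have effect: "povm M0 1 = sharp_effect 1 n 1"
    using assms(2) unfolding spin_measurement_def by simp
  obtain Pp Pm where Pp: "rho Pp = sharp_effect 1 n 1" and Pm: "rho Pm = sharp_effect 1 n (-1)"
    using exists_preparation density_op_sharp_effect[OF assms(1)] by blast
  have "AE l in mu Pp. xi M0 1 l = 1"
    using sharp_effect_idempotent[OF assms(1)] trace_sharp_effect
    by (intro AE_response_eq_1) (simp add: Pp effect)
  then have "AE l in mu Pp. l \<notin> B" by (auto simp: B_def)
  moreover have "AE l in mu Pm. xi M0 1 l = 0"
    using sharp_effect_orthogonal[OF assms(1)] by (intro AE_response_eq_0) (simp add: Pm effect trace_def)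
  then have "AE l in mu Pm. l \<notin> B" by (auto simp: B_def)
  moreover have "rho Pp + rho Pm = mat 1" using Pp Pm sharp_effect_sum by simp
  ultimately have "AE l in mu P. l \<notin> B"
    using AE_all_preparations_if_AE_complementary[OF B] by blast
  then show ?thesis
    using AE_space[of "mu P"] by eventually_elim (auto simp: B_def sets_eq_imp_space_eq[OF sets_mu])
qed

lemma response_binary_eq_det_resp:
  assumes "outs M = {1, -1}" "xi M 1 l \<in> {0, 1}" "X \<in> {1, -1}"
  shows "xi M X l = det_resp (if xi M 1 l = 1 then 1 else -1) X"
proof -
  have "xi M 1 l + xi M (-1) l = 1" using response_sum[of M l] assms(1) by simp
  then show ?thesis using assms(2,3) by (auto simp: det_resp_def)
qed

definition outcome_assignment :: "'m \<Rightarrow> 'l \<Rightarrow> int" where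
  "outcome_assignment M0 = (\<lambda>l. if xi M0 1 l = 1 then 1 else -1)"

lemma outcome_assignment_measurable: "outcome_assignment M0 \<in> measurable L (count_space UNIV)"
  unfolding outcome_assignment_def using response_measurable by measurable

lemma AE_spin_response:
  assumes "norm n = 1" "spin_measurement 1 n M0"
  shows "AE l in mu P. outcome_assignment M0 l \<in> {1, -1} \<and>
    (\<forall>M. spin_measurement 1 n M \<longrightarrow>
      (\<forall>X\<in>{1, -1}. xi M X l = det_resp (outcome_assignment M0 l) X)) \<and>
    (\<forall>\<eta>\<in>{0..1}. \<forall>M. spin_measurement \<eta> n M \<longrightarrow>
      (\<forall>X\<in>{1, -1}. xi M X l = \<eta> * det_resp (outcome_assignment M0 l) X
                                + (1 - \<eta>) * (1/2 * det_resp 1 X + 1/2 * det_resp (-1) X)))"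
  using AE_response_spin_measurement_binary[OF assms]
proof eventually_elim
  case (elim l)
  have det: "xi M0 X l = det_resp (outcome_assignment M0 l) X" if "X \<in> {1, -1}" for X
    using response_binary_eq_det_resp[OF _ elim that] assms(2)
    unfolding outcome_assignment_def spin_measurement_def by blast
  have coin: "1/2 * det_resp 1 X + 1/2 * det_resp (-1) X = 1/2" if "X \<in> {1, -1}" for X
    using that by (auto simp: det_resp_def)
  have "outcome_assignment M0 l \<in> {1, -1}" by (simp add: outcome_assignment_def)
  then show ?case
    using det coin response_spin_measurement_unique[OF _ assms(2)]
      response_noisy_spin_measurement[OF assms(2)]
    by auto
qed

end

theorem lemma2:
  fixes L :: "'l measure" and rho :: "'p \<Rightarrow> qop" and mu :: "'p \<Rightarrow> 'l measure"
    and outs :: "'m \<Rightarrow> int set" and povm :: "'m \<Rightarrow> int \<Rightarrow> qop"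
    and xi :: "'m \<Rightarrow> int \<Rightarrow> 'l \<Rightarrow> real" and n :: "real^3"
  assumes "ontological_model L rho mu outs povm xi"
    and "generalized_noncontextual rho mu outs povm xi"
    and "norm n = 1"
  shows "\<exists>Xk :: 'l \<Rightarrow> int. Xk \<in> measurable L (count_space UNIV) \<and>
    (\<forall>P. AE lam in mu P. Xk lam \<in> {1, -1} \<and>
       (\<forall>M. outs M = {1, -1} \<and> (\<forall>X\<in>{1, -1}. povm M X = sharp_effect 1 n X) \<longrightarrow>
          (\<forall>X\<in>{1, -1}. xi M X lam = det_resp (Xk lam) X)) \<and>
       (\<forall>\<eta>\<in>{0..1}. \<forall>M. outs M = {1, -1} \<and> (\<forall>X\<in>{1, -1}. povm M X = sharp_effect \<eta> n X) \<longrightarrow>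
          (\<forall>X\<in>{1, -1}. xi M X lam =
             \<eta> * det_resp (Xk lam) X + (1 - \<eta>) * (1/2 * det_resp 1 X + 1/2 * det_resp (-1) X))))"
proof -
  interpret noncontextual_model L rho mu outs povm xi
    using assms(1,2) by (rule noncontextual_modelI)
  obtain M0 where "spin_measurement 1 n M0"
    using exists_spin_measurement[OF assms(3)] by blast
  then show ?thesis
    unfolding spin_measurement_def[symmetric]
    using outcome_assignment_measurable AE_spin_response[OF assms(3)] by blast
qed

end
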